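(* Let $(V,b,\mu)$ be a locally finite, weighted, connected graph with $\mu(x)\geq\mu_0$ for all $x\in V$, for some constant $\mu_0>0$, and let $\theta$ be a phase function on it. Fix $x_0\in V$ and, for $n\in\mathbb{Z}_+$, let $\beta_n=\frac{d_{2n}p_{2n}}{\mu_0 n}$ and let $\chi_n$ be the cut-off function defined below. Let $q\colon[0,\infty)\to(0,\infty)$ be non-decreasing with $q(s)=O(s^\alpha)$ for some $0\leq\alpha\leq1$, and let $W\colon V\to\mathbb{R}$ satisfy $W(x)\geq -q(r(x))$ for all $x\in V$. Let $H u=\Delta_{b,\theta}^2u+Wu$. Assume there exist numbers $0<C_1<1$ and $N_1\in\mathbb{Z}_+$ such that $\beta_n\leq C_1$ for all $n\geq N_1$. Assume that $u\in\mathrm{Dom}(H_{\max})$ satisfies $(H-\lambda i)u=0$ for some $\lambda\in\mathbb{R}$. Then there exists a constant $C$ independent of $n$ such that for all $n\geq N_1$, $$\|\Delta_{b,\theta}(\chi_nu)\|^2\leq C\left[\beta_n\|u\|^2+((q\circ r)\chi_nu,\chi_nu)\right].$$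
   Context: $V$ is a countably infinite set, $\mu\colon V\to(0,\infty)$, and $b\colon V\times V\to[0,\infty)$ satisfies $b(x,y)=b(y,x)$, $b(x,x)=0$, $\deg(x):=\#\{y: b(x,y)>0\}<\infty$; $x\sim y$ means $b(x,y)>0$; connectedness means any two vertices are joined by a finite path of neighbors, and $d(x,y)$ is the combinatorial (path-length) distance; $r(x)=d(x_0,x)$. A phase function is $\theta\colon V\times V\to[-\pi,\pi]$ with $\theta(x,y)=-\theta(y,x)$. $\ell^2(V,\mu)$ is the space of $f\colon V\to\mathbb{C}$ with $\|f\|^2=\sum_x\mu(x)|f(x)|^2<\infty$, inner product $(f,g)=\sum_x\mu(x)f(x)\overline{g(x)}$. The magnetic Laplacian is $(\Delta_{b,\theta}u)(x)=\frac{1}{\mu(x)}\sum_{y}b(x,y)(u(x)-e^{i\theta(x,y)}u(y))$, and $\Delta_{b,\theta}^2u=\Delta_{b,\theta}(\Delta_{b,\theta}u)$. $\mathrm{Dom}(H_{\max})=\{u\in\ell^2(V,\mu): Hu\in\ell^2(V,\mu)\}$. $B(x_0,n)=\{x: r(x)\leq n\}$ (plus edges between such vertices), $d_n=\max_{x\in B(x_0,n)}\deg(x)$, $p_n=\max_{x\in B(x_0,n)}\max_{y\in V}b(x,y)$. The cut-off is $\chi_n(x)=\left(\left(\frac{2n-d(x_0,x)}{n}\right)\vee 0\right)\wedge 1$, where $a\wedge z=\min\{a,z\}$, $a\vee z=\max\{a,z\}$. $(q\circ r)$ is the composition $x\mapsto q(r(x))$. *)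

theory Defs
  imports "HOL-Analysis.Analysis" "HOL-Library.Landau_Symbols"
begin

definition edges :: "('v \<Rightarrow> 'v \<Rightarrow> real) \<Rightarrow> ('v \<times> 'v) set" where
  "edges b = {(x, y). b x y > 0}"

definition neighbours :: "('v \<Rightarrow> 'v \<Rightarrow> real) \<Rightarrow> 'v \<Rightarrow> 'v set" where
  "neighbours b x = {y. b x y > 0}"

definition deg :: "('v \<Rightarrow> 'v \<Rightarrow> real) \<Rightarrow> 'v \<Rightarrow> nat" where
  "deg b x = card (neighbours b x)"

text \<open>Locally finite weighted graph on the whole type 'v (vertex set V = UNIV).\<close>
definition weighted_graph :: "('v \<Rightarrow> 'v \<Rightarrow> real) \<Rightarrow> bool" where
  "weighted_graph b \<longleftrightarrow>
     (\<forall>x y. b x y \<ge> 0) \<and> (\<forall>x y. b x y = b y x) \<and> (\<forall>x. b x x = 0)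
     \<and> (\<forall>x. finite (neighbours b x))"

definition graph_connected :: "('v \<Rightarrow> 'v \<Rightarrow> real) \<Rightarrow> bool" where
  "graph_connected b \<longleftrightarrow> (\<forall>x y. (x, y) \<in> (edges b)\<^sup>*)"

definition gdist :: "('v \<Rightarrow> 'v \<Rightarrow> real) \<Rightarrow> 'v \<Rightarrow> 'v \<Rightarrow> nat" where
  "gdist b x y = (LEAST n. (x, y) \<in> (edges b) ^^ n)"

definition phase_function :: "('v \<Rightarrow> 'v \<Rightarrow> real) \<Rightarrow> bool" where
  "phase_function \<theta> \<longleftrightarrow> (\<forall>x y. -pi \<le> \<theta> x y \<and> \<theta> x y \<le> pi \<and> \<theta> x y = - \<theta> y x)"

definition ball_comb :: "('v \<Rightarrow> 'v \<Rightarrow> real) \<Rightarrow> 'v \<Rightarrow> nat \<Rightarrow> 'v set" where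
  "ball_comb b x0 n = {x. gdist b x0 x \<le> n}"

definition dmax :: "('v \<Rightarrow> 'v \<Rightarrow> real) \<Rightarrow> 'v \<Rightarrow> nat \<Rightarrow> nat" where
  "dmax b x0 n = Max (deg b ` ball_comb b x0 n)"

definition pmax :: "('v \<Rightarrow> 'v \<Rightarrow> real) \<Rightarrow> 'v \<Rightarrow> nat \<Rightarrow> real" where
  "pmax b x0 n = Max {b x y | x y. x \<in> ball_comb b x0 n}"

definition beta :: "('v \<Rightarrow> 'v \<Rightarrow> real) \<Rightarrow> real \<Rightarrow> 'v \<Rightarrow> nat \<Rightarrow> real" where
  "beta b \<mu>0 x0 n = real (dmax b x0 (2*n)) * pmax b x0 (2*n) / (\<mu>0 * real n)"

definition cutoff :: "('v \<Rightarrow> 'v \<Rightarrow> real) \<Rightarrow> 'v \<Rightarrow> nat \<Rightarrow> 'v \<Rightarrow> real" where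
  "cutoff b x0 n x = min (max ((2 * real n - real (gdist b x0 x)) / real n) 0) 1"

definition mag_lap ::
  "('v \<Rightarrow> 'v \<Rightarrow> real) \<Rightarrow> ('v \<Rightarrow> 'v \<Rightarrow> real) \<Rightarrow> ('v \<Rightarrow> real) \<Rightarrow> ('v \<Rightarrow> complex) \<Rightarrow> 'v \<Rightarrow> complex" where
  "mag_lap b \<theta> \<mu> u x =
     (1 / complex_of_real (\<mu> x)) *
     (\<Sum>y\<in>neighbours b x. complex_of_real (b x y) * (u x - exp (\<i> * complex_of_real (\<theta> x y)) * u y))"

definition in_l2 :: "('v \<Rightarrow> real) \<Rightarrow> ('v \<Rightarrow> complex) \<Rightarrow> bool" where
  "in_l2 \<mu> f \<longleftrightarrow> (\<lambda>x. \<mu> x * (cmod (f x))\<^sup>2) summable_on UNIV"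

definition l2_norm_sq :: "('v \<Rightarrow> real) \<Rightarrow> ('v \<Rightarrow> complex) \<Rightarrow> real" where
  "l2_norm_sq \<mu> f = (\<Sum>\<^sub>\<infinity>x. \<mu> x * (cmod (f x))\<^sup>2)"

definition l2_inner :: "('v \<Rightarrow> real) \<Rightarrow> ('v \<Rightarrow> complex) \<Rightarrow> ('v \<Rightarrow> complex) \<Rightarrow> complex" where
  "l2_inner \<mu> f g = (\<Sum>\<^sub>\<infinity>x. complex_of_real (\<mu> x) * f x * cnj (g x))"

end

theory Submission
  imports Defs
begin

text \<open>Write \<open>\<Delta>\<close> for the magnetic Laplacian and \<open>\<chi> = \<chi>\<^sub>n\<close>. A discrete Leibniz rule gives, pointwise,
  \<open>|\<Delta>(\<chi>u)|\<^sup>2 = Re (\<Delta>u \<cdot> cnj \<Delta>(\<chi>\<^sup>2u)) + |K u|\<^sup>2 + Re (\<Delta>u \<cdot> cnj M u)\<close>, where the commutator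
  terms K and M only involve the differences \<open>\<chi> x - \<chi> y\<close> along edges, which are at most \<open>1/n\<close>.
  Summation by parts and the eigenvalue equation turn the first term into
  \<open>-(W\<chi>u, \<chi>u) \<le> ((q \<circ> r)\<chi>u, \<chi>u)\<close>. Since \<open>d\<^sub>k p\<^sub>k\<close> bounds the weighted degree on the ball of
  radius k, weighted Cauchy-Schwarz bounds the commutator terms by
  \<open>3 d\<^sub>2\<^sub>n p\<^sub>2\<^sub>n d\<^sub>2\<^sub>n\<^sub>+\<^sub>1 p\<^sub>2\<^sub>n\<^sub>+\<^sub>1 \<parallel>u\<parallel>\<^sup>2 / (\<mu>\<^sub>0 n)\<^sup>2\<close>, and \<open>\<beta>\<^sub>n\<^sub>+\<^sub>1 \<le> 1\<close> makes this at most \<open>6 \<beta>\<^sub>n \<parallel>u\<parallel>\<^sup>2\<close>.\<close>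

lemma weighted_Cauchy_Schwarz:
  fixes w a :: "'a \<Rightarrow> real"
  assumes "\<And>i. i \<in> I \<Longrightarrow> w i \<ge> 0"
  shows "(\<Sum>i\<in>I. w i * a i)\<^sup>2 \<le> (\<Sum>i\<in>I. w i) * (\<Sum>i\<in>I. w i * (a i)\<^sup>2)"
proof -
  have "(\<Sum>i\<in>I. w i * a i)\<^sup>2 = (\<Sum>i\<in>I. sqrt (w i) * (sqrt (w i) * a i))\<^sup>2"
    using assms by (intro arg_cong[where f="\<lambda>z. z\<^sup>2"] sum.cong) (auto simp flip: mult.assoc)
  also have "\<dots> \<le> (\<Sum>i\<in>I. (sqrt (w i))\<^sup>2) * (\<Sum>i\<in>I. (sqrt (w i) * a i)\<^sup>2)"
    by (rule Cauchy_Schwarz_ineq_sum)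
  also have "\<dots> = (\<Sum>i\<in>I. w i) * (\<Sum>i\<in>I. w i * (a i)\<^sup>2)"
    using assms by (intro arg_cong2[where f="(*)"] sum.cong) (auto simp: power_mult_distrib)
  finally show ?thesis .
qed

lemma abs_clamp_diff_le:
  fixes a c :: real
  shows "\<bar>min (max a 0) 1 - min (max c 0) 1\<bar> \<le> \<bar>a - c\<bar>"
  by (auto simp: min_def max_def)

lemma Re_mult_cnj_of_real:
  "Re (of_real m * (of_real (c * a) * z) * cnj (of_real a * z)) = m * c * a\<^sup>2 * (cmod z)\<^sup>2"
  unfolding cmod_power2 by (simp add: algebra_simps power2_eq_square)

lemma l2_norm_sq_finite_support:
  assumes "finite S" "\<And>x. x \<notin> S \<Longrightarrow> f x = 0"
  shows "l2_norm_sq \<mu> f = (\<Sum>x\<in>S. \<mu> x * (cmod (f x))\<^sup>2)"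
proof -
  have "l2_norm_sq \<mu> f = (\<Sum>\<^sub>\<infinity>x\<in>S. \<mu> x * (cmod (f x))\<^sup>2)"
    unfolding l2_norm_sq_def by (rule infsum_cong_neutral) (use assms in auto)
  then show ?thesis using assms(1) by simp
qed

lemma l2_inner_finite_support:
  assumes "finite S" "\<And>x. x \<notin> S \<Longrightarrow> g x = 0"
  shows "l2_inner \<mu> f g = (\<Sum>x\<in>S. of_real (\<mu> x) * f x * cnj (g x))"
proof -
  have "l2_inner \<mu> f g = (\<Sum>\<^sub>\<infinity>x\<in>S. of_real (\<mu> x) * f x * cnj (g x))"
    unfolding l2_inner_def by (rule infsum_cong_neutral) (use assms in auto)
  then show ?thesis using assms(1) by simp
qed

lemma sum_le_l2_norm_sq:
  assumes "in_l2 \<mu> f" "\<And>x. \<mu> x \<ge> 0" "finite S"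
  shows "(\<Sum>x\<in>S. \<mu> x * (cmod (f x))\<^sup>2) \<le> l2_norm_sq \<mu> f"
  unfolding l2_norm_sq_def using assms
  by (intro finite_sum_le_infsum) (auto simp: in_l2_def)

section \<open>Weighted graphs and balls\<close>

locale rooted_graph =
  fixes b :: "'v \<Rightarrow> 'v \<Rightarrow> real" and x0 :: 'v
  assumes graph: "weighted_graph b" and conn: "graph_connected b"
begin

abbreviation "N \<equiv> neighbours b"

abbreviation "r \<equiv> gdist b x0"

abbreviation "B \<equiv> ball_comb b x0"

lemma b_nonneg: "b x y \<ge> 0"
  using graph by (simp add: weighted_graph_def)

lemma b_sym: "b x y = b y x"
  using graph by (simp add: weighted_graph_def)

lemma finite_neighbours: "finite (N x)"
  using graph by (simp add: weighted_graph_def)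

lemma in_neighbours_iff: "y \<in> N x \<longleftrightarrow> b x y > 0"
  by (simp add: neighbours_def)

lemma b_eq_0_if_not_neighbour: "y \<notin> N x \<Longrightarrow> b x y = 0"
  using b_nonneg[of x y] by (simp add: neighbours_def)

lemma sum_neighbours_eq:
  fixes G :: "'v \<Rightarrow> 'a::real_algebra_1"
  assumes "finite F" "N x \<subseteq> F"
  shows "(\<Sum>y\<in>N x. of_real (b x y) * G y) = (\<Sum>y\<in>F. of_real (b x y) * G y)"
  using assms finite_neighbours by (intro sum.mono_neutral_left) (auto simp: b_eq_0_if_not_neighbour)

lemma path_of_length_gdist: "(x0, x) \<in> edges b ^^ r x"
proof -
  have "(x0, x) \<in> (edges b)\<^sup>*"
    using conn by (simp add: graph_connected_def)
  then obtain n where "(x0, x) \<in> edges b ^^ n"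
    using rtrancl_power by blast
  then show ?thesis
    unfolding gdist_def by (rule LeastI)
qed

lemma gdist_le_if_path: "(x0, x) \<in> edges b ^^ n \<Longrightarrow> r x \<le> n"
  unfolding gdist_def by (rule Least_le)

lemma gdist_neighbour_le:
  assumes "b x y > 0"
  shows "r y \<le> Suc (r x)"
  using path_of_length_gdist[of x] assms by (intro gdist_le_if_path) (auto simp: edges_def)

lemma gdist_neighbour_ge:
  assumes "b x y > 0"
  shows "r x \<le> Suc (r y)"
  using gdist_neighbour_le[of y x] assms b_sym[of x y] by simp

lemma centre_in_ball: "x0 \<in> B k"
proof -
  have "r x0 = 0"
    unfolding gdist_def by (rule Least_eq_0) simp
  then show ?thesis
    by (simp add: ball_comb_def)
qed

lemma ball_mono: "k \<le> l \<Longrightarrow> B k \<subseteq> B l"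
  by (auto simp: ball_comb_def)

lemma neighbours_subset_ball_Suc: "x \<in> B k \<Longrightarrow> N x \<subseteq> B (Suc k)"
  using gdist_neighbour_le by (fastforce simp: ball_comb_def in_neighbours_iff)

lemma ball_Suc_subset: "B (Suc k) \<subseteq> B k \<union> (\<Union>x\<in>B k. N x)"
proof
  fix y assume y: "y \<in> B (Suc k)"
  show "y \<in> B k \<union> (\<Union>x\<in>B k. N x)"
  proof (cases "r y \<le> k")
    case False
    then have "(x0, y) \<in> edges b ^^ k O edges b"
      using y path_of_length_gdist[of y] by (simp add: ball_comb_def le_Suc_eq)
    then obtain x where "(x0, x) \<in> edges b ^^ k" "(x, y) \<in> edges b"
      by blast
    then show ?thesis
      using gdist_le_if_path by (auto simp: ball_comb_def edges_def neighbours_def)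
  qed (simp add: ball_comb_def)
qed

lemma finite_ball: "finite (B k)"
proof (induction k)
  case 0
  have "B 0 \<subseteq> {x0}"
  proof
    fix x assume "x \<in> B 0"
    then show "x \<in> {x0}"
      using path_of_length_gdist[of x] by (simp add: ball_comb_def)
  qed
  then show ?case
    using finite_subset by blast
next
  case (Suc k)
  then show ?case
    using ball_Suc_subset[of k] finite_neighbours by (meson finite_UN_I finite_Un finite_subset)
qed

definition weighted_degree_bound :: "nat \<Rightarrow> real" where
  "weighted_degree_bound k = real (dmax b x0 k) * pmax b x0 k"

lemma finite_weights_on_ball: "finite {b x y | x y. x \<in> B k}"
proof -
  have "{b x y | x y. x \<in> B k} \<subseteq> insert 0 (\<Union>x\<in>B k. b x ` N x)"
    using b_eq_0_if_not_neighbour by auto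
  then show ?thesis
    using finite_ball finite_neighbours by (meson finite_UN_I finite_imageI finite_insert finite_subset)
qed

lemma deg_le_dmax: "x \<in> B k \<Longrightarrow> deg b x \<le> dmax b x0 k"
  unfolding dmax_def using finite_ball by auto

lemma b_le_pmax: "x \<in> B k \<Longrightarrow> b x y \<le> pmax b x0 k"
  unfolding pmax_def using finite_weights_on_ball by (intro Max_ge) auto

lemma pmax_nonneg: "pmax b x0 k \<ge> 0"
  using b_le_pmax[OF centre_in_ball[of k], of x0] b_nonneg[of x0 x0] by linarith

lemma weighted_degree_bound_nonneg: "weighted_degree_bound k \<ge> 0"
  by (simp add: weighted_degree_bound_def pmax_nonneg)

lemma weighted_degree_bound_mono:
  assumes "k \<le> l"
  shows "weighted_degree_bound k \<le> weighted_degree_bound l"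
proof -
  have "dmax b x0 k \<le> dmax b x0 l"
    unfolding dmax_def using finite_ball centre_in_ball ball_mono[OF assms]
    by (intro Max_mono) auto
  moreover have "pmax b x0 k \<le> pmax b x0 l"
    unfolding pmax_def using assms finite_weights_on_ball ball_mono[OF assms]
    by (intro Max_mono) (auto intro: centre_in_ball)
  ultimately show ?thesis
    unfolding weighted_degree_bound_def by (intro mult_mono) (auto simp: pmax_nonneg)
qed

lemma weighted_degree_le:
  assumes "x \<in> B k" "finite F"
  shows "(\<Sum>y\<in>F. b x y) \<le> weighted_degree_bound k"
proof -
  have "(\<Sum>y\<in>F. b x y) = (\<Sum>y\<in>F \<inter> N x. b x y)"
    using assms(2) by (intro sum.mono_neutral_right) (auto simp: b_eq_0_if_not_neighbour)
  also have "\<dots> \<le> (\<Sum>y\<in>N x. b x y)"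
    using finite_neighbours b_nonneg by (intro sum_mono2) auto
  also have "\<dots> \<le> real (deg b x) * pmax b x0 k"
    using sum_bounded_above[of "N x" "\<lambda>y. b x y" "pmax b x0 k"] b_le_pmax[OF assms(1)]
    by (simp add: deg_def)
  also have "\<dots> \<le> weighted_degree_bound k"
    unfolding weighted_degree_bound_def using deg_le_dmax[OF assms(1)] pmax_nonneg
    by (intro mult_right_mono) auto
  finally show ?thesis .
qed

lemma sum_weighted_swap_le:
  assumes "finite A" "F \<subseteq> B k" "\<And>y. h y \<ge> 0"
  shows "(\<Sum>x\<in>A. \<Sum>y\<in>F. b x y * h y) \<le> weighted_degree_bound k * (\<Sum>y\<in>F. h y)"
proof -
  have "(\<Sum>x\<in>A. \<Sum>y\<in>F. b x y * h y) = (\<Sum>y\<in>F. h y * (\<Sum>x\<in>A. b y x))"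
    by (subst sum.swap) (simp add: sum_distrib_left b_sym mult.commute)
  also have "\<dots> \<le> (\<Sum>y\<in>F. h y * weighted_degree_bound k)"
    using assms by (intro sum_mono mult_left_mono weighted_degree_le) auto
  finally show ?thesis
    by (simp add: sum_distrib_right mult.commute)
qed

lemma neighbour_sum_sq_le:
  assumes "x \<in> B k"
  shows "(\<Sum>y\<in>N x. b x y * f y)\<^sup>2 \<le> weighted_degree_bound k * (\<Sum>y\<in>N x. b x y * (f y)\<^sup>2)"
proof -
  have "(\<Sum>y\<in>N x. b x y * f y)\<^sup>2 \<le> (\<Sum>y\<in>N x. b x y) * (\<Sum>y\<in>N x. b x y * (f y)\<^sup>2)"
    by (rule weighted_Cauchy_Schwarz) (simp add: b_nonneg)
  also have "\<dots> \<le> weighted_degree_bound k * (\<Sum>y\<in>N x. b x y * (f y)\<^sup>2)"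
    using assms finite_neighbours b_nonneg
    by (intro mult_right_mono weighted_degree_le sum_nonneg) auto
  finally show ?thesis .
qed

lemma ball_neighbour_sum_sq_le:
  "(\<Sum>x\<in>B k. (\<Sum>y\<in>N x. b x y * f y)\<^sup>2)
     \<le> weighted_degree_bound k * weighted_degree_bound (Suc k) * (\<Sum>y\<in>B (Suc k). (f y)\<^sup>2)"
proof -
  have "(\<Sum>x\<in>B k. (\<Sum>y\<in>N x. b x y * f y)\<^sup>2)
      \<le> (\<Sum>x\<in>B k. weighted_degree_bound k * (\<Sum>y\<in>B (Suc k). b x y * (f y)\<^sup>2))"
  proof (rule sum_mono)
    fix x assume x: "x \<in> B k"
    have "(\<Sum>y\<in>N x. b x y * (f y)\<^sup>2) = (\<Sum>y\<in>B (Suc k). b x y * (f y)\<^sup>2)"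
      using sum_neighbours_eq[OF finite_ball neighbours_subset_ball_Suc[OF x], where G="\<lambda>y. (f y)\<^sup>2"]
      by simp
    then show "(\<Sum>y\<in>N x. b x y * f y)\<^sup>2 \<le> weighted_degree_bound k * (\<Sum>y\<in>B (Suc k). b x y * (f y)\<^sup>2)"
      using neighbour_sum_sq_le[OF x, of f] by simp
  qed
  also have "\<dots> \<le> weighted_degree_bound k * (weighted_degree_bound (Suc k) * (\<Sum>y\<in>B (Suc k). (f y)\<^sup>2))"
    unfolding sum_distrib_left[symmetric] using finite_ball weighted_degree_bound_nonneg
    by (intro mult_left_mono sum_weighted_swap_le) auto
  finally show ?thesis
    by (simp add: mult.assoc)
qed

lemma cutoff_eq_0: "2 * n \<le> r x \<Longrightarrow> cutoff b x0 n x = 0"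
  by (simp add: cutoff_def divide_le_0_iff)

lemma abs_cutoff_diff_le:
  assumes "b x y > 0"
  shows "\<bar>cutoff b x0 n x - cutoff b x0 n y\<bar> \<le> 1 / real n"
proof -
  have "\<bar>real (r y) - real (r x)\<bar> \<le> 1"
    using gdist_neighbour_le[OF assms] gdist_neighbour_ge[OF assms] by linarith
  then have "\<bar>(2 * real n - real (r x)) / real n - (2 * real n - real (r y)) / real n\<bar> \<le> 1 / real n"
    by (simp add: diff_divide_distrib[symmetric] abs_divide divide_right_mono)
  then show ?thesis
    unfolding cutoff_def using abs_clamp_diff_le order_trans by blast
qed

end

section \<open>The magnetic Laplacian\<close>

locale magnetic_graph = rooted_graph b x0 for b :: "'v \<Rightarrow> 'v \<Rightarrow> real" and x0 +
  fixes \<theta> :: "'v \<Rightarrow> 'v \<Rightarrow> real" and \<mu> :: "'v \<Rightarrow> real" and \<mu>0 :: real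
  assumes mu0_pos: "\<mu>0 > 0" and mu_ge: "\<And>x. \<mu> x \<ge> \<mu>0"
    and phase: "phase_function \<theta>"
begin

abbreviation "L \<equiv> mag_lap b \<theta> \<mu>"

definition phase_factor :: "'v \<Rightarrow> 'v \<Rightarrow> complex" where
  "phase_factor x y = exp (\<i> * complex_of_real (\<theta> x y))"

lemma mu_pos: "\<mu> x > 0"
  using mu0_pos mu_ge[of x] by linarith

lemma cnj_phase_factor: "cnj (phase_factor x y) = phase_factor y x"
proof -
  have "\<theta> y x = - \<theta> x y"
    using phase unfolding phase_function_def by (metis minus_minus)
  then show ?thesis
    by (simp add: phase_factor_def exp_cnj)
qed

lemma norm_phase_factor: "cmod (phase_factor x y) = 1"
  by (simp add: phase_factor_def)

lemma mag_lap_eq: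
  "L f x = (1 / of_real (\<mu> x)) * (\<Sum>y\<in>N x. of_real (b x y) * (f x - phase_factor x y * f y))"
  by (simp add: mag_lap_def phase_factor_def)

lemma mu_mult_mag_lap_eq:
  assumes "finite F" "N x \<subseteq> F"
  shows "of_real (\<mu> x) * L f x = (\<Sum>y\<in>F. of_real (b x y) * (f x - phase_factor x y * f y))"
  using mu_pos[of x] sum_neighbours_eq[OF assms] by (simp add: mag_lap_eq)

lemma mu_mult_cnj_mag_lap_eq:
  assumes "finite F" "N x \<subseteq> F"
  shows "of_real (\<mu> x) * f x * cnj (L g x)
    = (\<Sum>y\<in>F. of_real (b x y) * f x * cnj (g x))
      - (\<Sum>y\<in>F. of_real (b x y) * f x * phase_factor y x * cnj (g y))"
proof -
  have "of_real (\<mu> x) * f x * cnj (L g x) = f x * cnj (of_real (\<mu> x) * L g x)"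
    by simp
  also have "\<dots> = f x * cnj (\<Sum>y\<in>F. of_real (b x y) * (g x - phase_factor x y * g y))"
    by (simp only: mu_mult_mag_lap_eq[OF assms])
  finally show ?thesis
    by (simp add: cnj_sum sum_distrib_left sum_subtractf[symmetric] cnj_phase_factor algebra_simps)
qed

lemma green_formula:
  assumes g: "\<And>x. x \<notin> B k \<Longrightarrow> g x = 0"
  shows "(\<Sum>x\<in>B (Suc k). of_real (\<mu> x) * f x * cnj (L g x))
       = (\<Sum>x\<in>B k. of_real (\<mu> x) * L f x * cnj (g x))"
proof -
  let ?S = "B k" and ?S' = "B (Suc k)" and ?T = "B (Suc (Suc k))"
  \<comment> \<open>every edge at a point of \<open>?S'\<close> ends in \<open>?T\<close>, so all double sums can be taken over \<open>?S' \<times> ?T\<close>\<close>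
  have SS': "?S \<subseteq> ?S'" and S'T: "?S' \<subseteq> ?T"
    by (simp_all add: ball_mono)
  have L_T: "of_real (\<mu> x) * L h x = (\<Sum>y\<in>?T. of_real (b x y) * (h x - phase_factor x y * h y))"
    if "x \<in> ?S'" for h x
    using that by (intro mu_mult_mag_lap_eq finite_ball neighbours_subset_ball_Suc)
  have "(\<Sum>x\<in>?S'. of_real (\<mu> x) * f x * cnj (L g x))
      = (\<Sum>x\<in>?S'. \<Sum>y\<in>?T. of_real (b x y) * f x * cnj (g x))
        - (\<Sum>x\<in>?S'. \<Sum>y\<in>?T. of_real (b x y) * f x * phase_factor y x * cnj (g y))"
  proof -
    have "(\<Sum>x\<in>?S'. of_real (\<mu> x) * f x * cnj (L g x))
        = (\<Sum>x\<in>?S'. (\<Sum>y\<in>?T. of_real (b x y) * f x * cnj (g x))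
            - (\<Sum>y\<in>?T. of_real (b x y) * f x * phase_factor y x * cnj (g y)))"
      by (intro sum.cong refl mu_mult_cnj_mag_lap_eq finite_ball neighbours_subset_ball_Suc)
    then show ?thesis
      by (simp only: sum_subtractf)
  qed
  also have "(\<Sum>x\<in>?S'. \<Sum>y\<in>?T. of_real (b x y) * f x * cnj (g x))
      = (\<Sum>x\<in>?S. \<Sum>y\<in>?T. of_real (b x y) * f x * cnj (g x))"
    using SS' g finite_ball by (intro sum.mono_neutral_right) auto
  also have "(\<Sum>x\<in>?S'. \<Sum>y\<in>?T. of_real (b x y) * f x * phase_factor y x * cnj (g y))
      = (\<Sum>x\<in>?S'. \<Sum>y\<in>?S. of_real (b x y) * f x * phase_factor y x * cnj (g y))"
    using SS' S'T g finite_ball by (intro sum.cong refl sum.mono_neutral_right) auto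
  also have "\<dots> = (\<Sum>y\<in>?S. \<Sum>x\<in>?S'. of_real (b y x) * (phase_factor y x * f x) * cnj (g y))"
    by (subst sum.swap) (simp add: b_sym algebra_simps)
  also have "\<dots> = (\<Sum>y\<in>?S. \<Sum>x\<in>?T. of_real (b y x) * (phase_factor y x * f x) * cnj (g y))"
  proof -
    have "b y x = 0" if "y \<in> ?S" "x \<notin> ?S'" for x y
      using that neighbours_subset_ball_Suc b_eq_0_if_not_neighbour by blast
    then show ?thesis
      using S'T finite_ball by (intro sum.cong refl sum.mono_neutral_left) auto
  qed
  also have "(\<Sum>x\<in>?S. \<Sum>y\<in>?T. of_real (b x y) * f x * cnj (g x))
      - (\<Sum>x\<in>?S. \<Sum>y\<in>?T. of_real (b x y) * (phase_factor x y * f y) * cnj (g x))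
      = (\<Sum>x\<in>?S. (\<Sum>y\<in>?T. of_real (b x y) * (f x - phase_factor x y * f y)) * cnj (g x))"
    unfolding sum_distrib_right sum_subtractf[symmetric] by (intro sum.cong refl) (simp add: algebra_simps)
  also have "\<dots> = (\<Sum>x\<in>?S. of_real (\<mu> x) * L f x * cnj (g x))"
    using SS' by (intro sum.cong refl) (auto simp: L_T)
  finally show ?thesis .
qed

definition lap_commutator :: "('v \<Rightarrow> real) \<Rightarrow> ('v \<Rightarrow> complex) \<Rightarrow> 'v \<Rightarrow> complex" where
  "lap_commutator \<phi> u x = (1 / of_real (\<mu> x)) *
     (\<Sum>y\<in>N x. of_real (b x y) * (phase_factor x y * (of_real (\<phi> x - \<phi> y) * u y)))"

definition lap_commutator2 :: "('v \<Rightarrow> real) \<Rightarrow> ('v \<Rightarrow> complex) \<Rightarrow> 'v \<Rightarrow> complex" where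
  "lap_commutator2 \<phi> u x = (1 / of_real (\<mu> x)) *
     (\<Sum>y\<in>N x. of_real (b x y) * (phase_factor x y * (of_real ((\<phi> x - \<phi> y)\<^sup>2) * u y)))"

lemma mag_lap_mult:
  "L (\<lambda>x. of_real (\<phi> x) * u x) x = of_real (\<phi> x) * L u x + lap_commutator \<phi> u x"
proof -
  have "(\<Sum>y\<in>N x. of_real (b x y) * (of_real (\<phi> x) * u x - phase_factor x y * (of_real (\<phi> y) * u y)))
    = of_real (\<phi> x) * (\<Sum>y\<in>N x. of_real (b x y) * (u x - phase_factor x y * u y))
      + (\<Sum>y\<in>N x. of_real (b x y) * (phase_factor x y * (of_real (\<phi> x - \<phi> y) * u y)))"
    unfolding sum_distrib_left sum.distrib[symmetric]
    by (intro sum.cong refl) (simp add: algebra_simps)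
  then show ?thesis
    unfolding mag_lap_eq lap_commutator_def by (simp add: algebra_simps)
qed

lemma mag_lap_mult_sq:
  "L (\<lambda>x. of_real ((\<phi> x)\<^sup>2) * u x) x
     = of_real ((\<phi> x)\<^sup>2) * L u x + 2 * of_real (\<phi> x) * lap_commutator \<phi> u x - lap_commutator2 \<phi> u x"
proof -
  have "(\<Sum>y\<in>N x. of_real (b x y) * (of_real ((\<phi> x)\<^sup>2) * u x - phase_factor x y * (of_real ((\<phi> y)\<^sup>2) * u y)))
    = of_real ((\<phi> x)\<^sup>2) * (\<Sum>y\<in>N x. of_real (b x y) * (u x - phase_factor x y * u y))
      + 2 * of_real (\<phi> x) * (\<Sum>y\<in>N x. of_real (b x y) * (phase_factor x y * (of_real (\<phi> x - \<phi> y) * u y)))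
      - (\<Sum>y\<in>N x. of_real (b x y) * (phase_factor x y * (of_real ((\<phi> x - \<phi> y)\<^sup>2) * u y)))"
    unfolding sum_distrib_left sum.distrib[symmetric] sum_subtractf[symmetric]
    by (intro sum.cong refl) (simp add: algebra_simps power2_eq_square)
  then show ?thesis
    unfolding mag_lap_eq lap_commutator_def lap_commutator2_def by (simp add: ring_distribs mult.left_commute)
qed

lemma norm_mag_lap_mult_sq:
  "(cmod (L (\<lambda>x. of_real (\<phi> x) * u x) x))\<^sup>2
     = Re (L u x * cnj (L (\<lambda>x. of_real ((\<phi> x)\<^sup>2) * u x) x))
       + (cmod (lap_commutator \<phi> u x))\<^sup>2 + Re (L u x * cnj (lap_commutator2 \<phi> u x))"
  unfolding mag_lap_mult_sq unfolding mag_lap_mult cmod_power2 by (simp add: algebra_simps power2_eq_square)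

lemma norm_twisted_sum_le:
  assumes "\<And>y. y \<in> N x \<Longrightarrow> \<bar>c y\<bar> \<le> \<epsilon>"
  shows "cmod ((1 / of_real (\<mu> x)) * (\<Sum>y\<in>N x. of_real (b x y) * (phase_factor x y * (of_real (c y) * u y))))
    \<le> \<epsilon> / \<mu> x * (\<Sum>y\<in>N x. b x y * cmod (u y))"
proof -
  have "cmod (\<Sum>y\<in>N x. of_real (b x y) * (phase_factor x y * (of_real (c y) * u y)))
      \<le> (\<Sum>y\<in>N x. b x y * (\<bar>c y\<bar> * cmod (u y)))"
    by (rule order_trans[OF norm_sum]) (simp add: norm_mult norm_phase_factor b_nonneg)
  also have "\<dots> \<le> \<epsilon> * (\<Sum>y\<in>N x. b x y * cmod (u y))"
    unfolding sum_distrib_left using assms b_nonneg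
    by (intro sum_mono) (simp add: mult.left_commute mult_left_mono mult_right_mono)
  finally show ?thesis
    using mu_pos[of x] by (simp add: norm_mult norm_divide divide_right_mono)
qed

lemma norm_mag_lap_le:
  "cmod (L u x) \<le> (cmod (u x) * (\<Sum>y\<in>N x. b x y) + (\<Sum>y\<in>N x. b x y * cmod (u y))) / \<mu> x"
proof -
  have "cmod (\<Sum>y\<in>N x. of_real (b x y) * (u x - phase_factor x y * u y))
      \<le> (\<Sum>y\<in>N x. b x y * (cmod (u x) + cmod (u y)))"
  proof (rule order_trans[OF norm_sum], rule sum_mono)
    fix y
    have "cmod (u x - phase_factor x y * u y) \<le> cmod (u x) + cmod (u y)"
      using norm_triangle_ineq4[of "u x" "phase_factor x y * u y"] by (simp add: norm_mult norm_phase_factor)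
    then show "cmod (of_real (b x y) * (u x - phase_factor x y * u y)) \<le> b x y * (cmod (u x) + cmod (u y))"
      by (simp add: norm_mult b_nonneg mult_left_mono)
  qed
  also have "\<dots> = cmod (u x) * (\<Sum>y\<in>N x. b x y) + (\<Sum>y\<in>N x. b x y * cmod (u y))"
    by (simp add: sum_distrib_left sum.distrib distrib_left mult.commute)
  finally show ?thesis
    using mu_pos[of x] by (simp add: mag_lap_eq norm_mult norm_divide divide_right_mono)
qed

lemma eigenfunction_green_term_le:
  assumes eigen: "\<And>x. L (L u) x + of_real (W x) * u x - of_real lam * \<i> * u x = 0"
    and W: "\<And>x. - Q x \<le> W x"
  shows "Re (\<Sum>x\<in>S. of_real (\<mu> x) * L (L u) x * cnj (of_real ((\<phi> x)\<^sup>2) * u x))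
    \<le> Re (\<Sum>x\<in>S. of_real (\<mu> x) * (of_real (Q x * \<phi> x) * u x) * cnj (of_real (\<phi> x) * u x))"
  unfolding Re_sum
proof (rule sum_mono)
  fix x
  have LLu: "L (L u) x = (of_real lam * \<i> - of_real (W x)) * u x"
    using eigen[of x] by (simp add: algebra_simps eq_iff_diff_eq_0[symmetric])
  have "Re (of_real (\<mu> x) * L (L u) x * cnj (of_real ((\<phi> x)\<^sup>2) * u x))
      = \<mu> x * (- W x) * (\<phi> x)\<^sup>2 * (cmod (u x))\<^sup>2"
    unfolding LLu cmod_power2 by (simp add: algebra_simps power2_eq_square)
  also have "\<dots> \<le> \<mu> x * Q x * (\<phi> x)\<^sup>2 * (cmod (u x))\<^sup>2"
    using W[of x] mu_pos[of x] by (intro mult_right_mono mult_left_mono) auto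
  also have "\<dots> = Re (of_real (\<mu> x) * (of_real (Q x * \<phi> x) * u x) * cnj (of_real (\<phi> x) * u x))"
    by (rule Re_mult_cnj_of_real[symmetric])
  finally show "Re (of_real (\<mu> x) * L (L u) x * cnj (of_real ((\<phi> x)\<^sup>2) * u x))
      \<le> Re (of_real (\<mu> x) * (of_real (Q x * \<phi> x) * u x) * cnj (of_real (\<phi> x) * u x))" .
qed

end

section \<open>Cut-off functions with bounded edge differences\<close>

locale lipschitz_cutoff = magnetic_graph b x0 \<theta> \<mu> \<mu>0
  for b :: "'v \<Rightarrow> 'v \<Rightarrow> real" and x0 \<theta> \<mu> \<mu>0 +
  fixes \<phi> :: "'v \<Rightarrow> real" and m :: nat and \<delta> :: real
  assumes vanishes_far: "\<And>x. m \<le> r x \<Longrightarrow> \<phi> x = 0"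
    and lipschitz: "\<And>x y. b x y > 0 \<Longrightarrow> \<bar>\<phi> x - \<phi> y\<bar> \<le> \<delta>"
begin

abbreviation "D \<equiv> weighted_degree_bound"

lemma vanishes_outside_ball: "x \<notin> B m \<Longrightarrow> \<phi> x = 0"
  by (intro vanishes_far) (simp add: ball_comb_def)

lemma vanishes_on_neighbours_outside_ball:
  assumes "x \<notin> B m" "y \<in> N x"
  shows "\<phi> y = 0"
  using assms gdist_neighbour_ge[of x y] by (intro vanishes_far) (auto simp: ball_comb_def in_neighbours_iff)

lemma lap_commutator_outside_ball: "x \<notin> B m \<Longrightarrow> lap_commutator \<phi> u x = 0"
  by (simp add: lap_commutator_def vanishes_outside_ball vanishes_on_neighbours_outside_ball)

lemma lap_commutator2_outside_ball: "x \<notin> B m \<Longrightarrow> lap_commutator2 \<phi> u x = 0"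
  by (simp add: lap_commutator2_def vanishes_outside_ball vanishes_on_neighbours_outside_ball)

lemma mag_lap_mult_outside_ball: "x \<notin> B m \<Longrightarrow> L (\<lambda>x. of_real (\<phi> x) * u x) x = 0"
  by (simp add: mag_lap_mult vanishes_outside_ball lap_commutator_outside_ball)

lemma mag_lap_mult_sq_outside_ball: "x \<notin> B m \<Longrightarrow> L (\<lambda>x. of_real ((\<phi> x)\<^sup>2) * u x) x = 0"
  unfolding mag_lap_mult_sq
  by (simp add: vanishes_outside_ball lap_commutator_outside_ball lap_commutator2_outside_ball)

lemma norm_lap_commutator_le:
  "cmod (lap_commutator \<phi> u x) \<le> \<delta> / \<mu> x * (\<Sum>y\<in>N x. b x y * cmod (u y))"
  unfolding lap_commutator_def by (intro norm_twisted_sum_le lipschitz) (simp add: in_neighbours_iff)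

lemma norm_lap_commutator2_le:
  "cmod (lap_commutator2 \<phi> u x) \<le> \<delta>\<^sup>2 / \<mu> x * (\<Sum>y\<in>N x. b x y * cmod (u y))"
  unfolding lap_commutator2_def
proof (intro norm_twisted_sum_le)
  fix y assume "y \<in> N x"
  then have "\<bar>\<phi> x - \<phi> y\<bar> \<le> \<delta>"
    by (intro lipschitz) (simp add: in_neighbours_iff)
  from power_mono[OF this abs_ge_zero, of 2]
  show "\<bar>(\<phi> x - \<phi> y)\<^sup>2\<bar> \<le> \<delta>\<^sup>2"
    by simp
qed

lemma mu_norm_lap_commutator_sq_le:
  fixes u :: "'v \<Rightarrow> complex" and x :: 'v
  defines "P \<equiv> \<Sum>y\<in>N x. b x y * cmod (u y)"
  shows "\<mu> x * (cmod (lap_commutator \<phi> u x))\<^sup>2 \<le> \<delta>\<^sup>2 / \<mu> x * P\<^sup>2"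
proof -
  have "\<mu> x * (cmod (lap_commutator \<phi> u x))\<^sup>2 \<le> \<mu> x * (\<delta> / \<mu> x * P)\<^sup>2"
    using norm_lap_commutator_le[of u x] mu_pos[of x] unfolding P_def
    by (intro mult_left_mono power_mono) auto
  also have "\<dots> = \<delta>\<^sup>2 / \<mu> x * P\<^sup>2"
    using mu_pos[of x] by (simp add: power2_eq_square)
  finally show ?thesis .
qed

lemma mu_Re_lap_commutator2_le:
  fixes u :: "'v \<Rightarrow> complex"
  assumes x: "x \<in> B m"
  defines "P \<equiv> \<Sum>y\<in>N x. b x y * cmod (u y)"
  shows "\<mu> x * Re (L u x * cnj (lap_commutator2 \<phi> u x))
    \<le> \<delta>\<^sup>2 / \<mu> x * (3/2 * P\<^sup>2 + 1/2 * (D m)\<^sup>2 * (cmod (u x))\<^sup>2)"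
proof -
  let ?w = "\<Sum>y\<in>N x. b x y"
  have P: "P \<ge> 0"
    unfolding P_def by (intro sum_nonneg) (simp add: b_nonneg)
  have w: "0 \<le> ?w" "?w \<le> D m"
    using x finite_neighbours by (simp_all add: sum_nonneg b_nonneg weighted_degree_le)
  have mu: "\<mu> x > 0"
    by (rule mu_pos)
  have "\<mu> x * Re (L u x * cnj (lap_commutator2 \<phi> u x))
      \<le> \<mu> x * (cmod (L u x) * cmod (lap_commutator2 \<phi> u x))"
    using mu complex_Re_le_cmod[of "L u x * cnj (lap_commutator2 \<phi> u x)"]
    by (intro mult_left_mono) (auto simp: norm_mult)
  also have "\<dots> \<le> \<mu> x * ((cmod (u x) * ?w + P) / \<mu> x * (\<delta>\<^sup>2 / \<mu> x * P))"
  proof -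
    have "cmod (L u x) \<le> (cmod (u x) * ?w + P) / \<mu> x"
      using norm_mag_lap_le[of u x] unfolding P_def .
    moreover have "cmod (lap_commutator2 \<phi> u x) \<le> \<delta>\<^sup>2 / \<mu> x * P"
      using norm_lap_commutator2_le[of u x] unfolding P_def .
    moreover have "0 \<le> (cmod (u x) * ?w + P) / \<mu> x"
      using mu w(1) P by simp
    ultimately show ?thesis
      using mu by (intro mult_left_mono mult_mono) auto
  qed
  also have "\<dots> = \<delta>\<^sup>2 / \<mu> x * (cmod (u x) * ?w * P + P\<^sup>2)"
    using mu by (simp add: power2_eq_square field_split_simps)
  also have "\<dots> \<le> \<delta>\<^sup>2 / \<mu> x * (3/2 * P\<^sup>2 + 1/2 * (D m)\<^sup>2 * (cmod (u x))\<^sup>2)"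
  proof -
    have "cmod (u x) * ?w * P \<le> cmod (u x) * D m * P"
      using w P by (intro mult_right_mono mult_left_mono) auto
    also have "\<dots> \<le> 1/2 * P\<^sup>2 + 1/2 * (D m)\<^sup>2 * (cmod (u x))\<^sup>2"
      using sum_squares_ge_zero[of "cmod (u x) * D m - P" 0] by (simp add: power2_eq_square algebra_simps)
    finally show ?thesis
      using mu by (intro mult_left_mono) auto
  qed
  finally show ?thesis .
qed

lemma commutator_terms_le:
  fixes u :: "'v \<Rightarrow> complex"
  assumes x: "x \<in> B m"
  defines "P \<equiv> \<Sum>y\<in>N x. b x y * cmod (u y)"
  shows "\<mu> x * (cmod (lap_commutator \<phi> u x))\<^sup>2 + \<mu> x * Re (L u x * cnj (lap_commutator2 \<phi> u x))
    \<le> \<delta>\<^sup>2 / \<mu>0 * (5/2 * P\<^sup>2 + 1/2 * (D m)\<^sup>2 * (cmod (u x))\<^sup>2)"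
proof -
  have "\<mu> x * (cmod (lap_commutator \<phi> u x))\<^sup>2 + \<mu> x * Re (L u x * cnj (lap_commutator2 \<phi> u x))
      \<le> \<delta>\<^sup>2 / \<mu> x * P\<^sup>2 + \<delta>\<^sup>2 / \<mu> x * (3/2 * P\<^sup>2 + 1/2 * (D m)\<^sup>2 * (cmod (u x))\<^sup>2)"
    unfolding P_def by (intro add_mono mu_norm_lap_commutator_sq_le mu_Re_lap_commutator2_le x)
  also have "\<dots> = \<delta>\<^sup>2 / \<mu> x * (5/2 * P\<^sup>2 + 1/2 * (D m)\<^sup>2 * (cmod (u x))\<^sup>2)"
    by (simp add: algebra_simps)
  also have "\<dots> \<le> \<delta>\<^sup>2 / \<mu>0 * (5/2 * P\<^sup>2 + 1/2 * (D m)\<^sup>2 * (cmod (u x))\<^sup>2)"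
    using mu_ge[of x] mu0_pos by (intro mult_right_mono divide_left_mono) auto
  finally show ?thesis .
qed

lemma sum_commutator_terms_le:
  "(\<Sum>x\<in>B m. \<mu> x * (cmod (lap_commutator \<phi> u x))\<^sup>2 + \<mu> x * Re (L u x * cnj (lap_commutator2 \<phi> u x)))
    \<le> 3 * \<delta>\<^sup>2 / \<mu>0 * D m * D (Suc m) * (\<Sum>y\<in>B (Suc m). (cmod (u y))\<^sup>2)"
proof -
  let ?P = "\<lambda>x. \<Sum>y\<in>N x. b x y * cmod (u y)"
  let ?V = "\<Sum>y\<in>B (Suc m). (cmod (u y))\<^sup>2"
  have DD: "0 \<le> D m" "D m \<le> D (Suc m)"
    by (simp_all add: weighted_degree_bound_nonneg weighted_degree_bound_mono)
  have P: "(\<Sum>x\<in>B m. (?P x)\<^sup>2) \<le> D m * D (Suc m) * ?V"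
    by (rule ball_neighbour_sum_sq_le)
  have "(D m)\<^sup>2 * (\<Sum>x\<in>B m. (cmod (u x))\<^sup>2) \<le> D m * D (Suc m) * ?V"
  proof -
    have "(\<Sum>x\<in>B m. (cmod (u x))\<^sup>2) \<le> ?V"
      using finite_ball ball_mono[of m "Suc m"] by (intro sum_mono2) auto
    moreover have "0 \<le> (\<Sum>x\<in>B m. (cmod (u x))\<^sup>2)"
      by (simp add: sum_nonneg)
    ultimately show ?thesis
      using DD unfolding power2_eq_square mult.assoc by (intro mult_mono mult_left_mono) auto
  qed
  then have "5/2 * (\<Sum>x\<in>B m. (?P x)\<^sup>2) + 1/2 * ((D m)\<^sup>2 * (\<Sum>x\<in>B m. (cmod (u x))\<^sup>2))
      \<le> 3 * (D m * D (Suc m) * ?V)"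
    using P by linarith
  then have "\<delta>\<^sup>2 / \<mu>0 * (\<Sum>x\<in>B m. 5/2 * (?P x)\<^sup>2 + 1/2 * (D m)\<^sup>2 * (cmod (u x))\<^sup>2)
      \<le> \<delta>\<^sup>2 / \<mu>0 * (3 * (D m * D (Suc m) * ?V))"
    using mu0_pos by (intro mult_left_mono) (simp_all add: sum.distrib sum_distrib_left mult.assoc)
  moreover have "(\<Sum>x\<in>B m. \<mu> x * (cmod (lap_commutator \<phi> u x))\<^sup>2 + \<mu> x * Re (L u x * cnj (lap_commutator2 \<phi> u x)))
      \<le> \<delta>\<^sup>2 / \<mu>0 * (\<Sum>x\<in>B m. 5/2 * (?P x)\<^sup>2 + 1/2 * (D m)\<^sup>2 * (cmod (u x))\<^sup>2)"
    unfolding sum_distrib_left by (intro sum_mono commutator_terms_le)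
  ultimately show ?thesis
    by (simp add: field_simps)
qed

lemma localized_energy_le:
  "(\<Sum>x\<in>B m. \<mu> x * (cmod (L (\<lambda>x. of_real (\<phi> x) * u x) x))\<^sup>2)
    \<le> Re (\<Sum>x\<in>B m. of_real (\<mu> x) * L (L u) x * cnj (of_real ((\<phi> x)\<^sup>2) * u x))
      + 3 * \<delta>\<^sup>2 / \<mu>0 * D m * D (Suc m) * (\<Sum>y\<in>B (Suc m). (cmod (u y))\<^sup>2)"
proof -
  let ?v = "\<lambda>x. of_real ((\<phi> x)\<^sup>2) * u x"
  have "(\<Sum>x\<in>B m. \<mu> x * Re (L u x * cnj (L ?v x)))
      = Re (\<Sum>x\<in>B m. of_real (\<mu> x) * L u x * cnj (L ?v x))"
    unfolding Re_sum by (simp add: mult.assoc)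
  also have "\<dots> = Re (\<Sum>x\<in>B (Suc m). of_real (\<mu> x) * L u x * cnj (L ?v x))"
    using finite_ball ball_mono[of m "Suc m"] mag_lap_mult_sq_outside_ball
    by (intro arg_cong[where f=Re] sum.mono_neutral_left) auto
  also have "\<dots> = Re (\<Sum>x\<in>B m. of_real (\<mu> x) * L (L u) x * cnj (?v x))"
    using vanishes_outside_ball by (subst green_formula) auto
  finally have "(\<Sum>x\<in>B m. \<mu> x * (cmod (L (\<lambda>x. of_real (\<phi> x) * u x) x))\<^sup>2)
      = Re (\<Sum>x\<in>B m. of_real (\<mu> x) * L (L u) x * cnj (?v x))
        + (\<Sum>x\<in>B m. \<mu> x * (cmod (lap_commutator \<phi> u x))\<^sup>2 + \<mu> x * Re (L u x * cnj (lap_commutator2 \<phi> u x)))"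
    unfolding norm_mag_lap_mult_sq distrib_left sum.distrib by (simp add: add.assoc)
  with sum_commutator_terms_le[of u] show ?thesis
    by linarith
qed

end

section \<open>The cut-off estimate\<close>

context magnetic_graph
begin

lemma mu0_sum_le_l2_norm_sq:
  assumes "in_l2 \<mu> u" "finite S"
  shows "\<mu>0 * (\<Sum>x\<in>S. (cmod (u x))\<^sup>2) \<le> l2_norm_sq \<mu> u"
proof -
  have "\<mu>0 * (\<Sum>x\<in>S. (cmod (u x))\<^sup>2) \<le> (\<Sum>x\<in>S. \<mu> x * (cmod (u x))\<^sup>2)"
    unfolding sum_distrib_left using mu_ge by (intro sum_mono mult_right_mono) auto
  also have "\<dots> \<le> l2_norm_sq \<mu> u"
    using assms mu_pos by (intro sum_le_l2_norm_sq) (auto simp: less_imp_le)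
  finally show ?thesis .
qed

lemma beta_nonneg: "beta b \<mu>0 x0 n \<ge> 0"
  using mu0_pos weighted_degree_bound_nonneg[of "2 * n"] by (simp add: beta_def weighted_degree_bound_def)

lemma weighted_degree_bound_eq_beta:
  "n > 0 \<Longrightarrow> weighted_degree_bound (2 * n) = beta b \<mu>0 x0 n * (\<mu>0 * real n)"
  using mu0_pos by (simp add: beta_def weighted_degree_bound_def)

lemma weighted_degree_bound_Suc_double_le:
  assumes "beta b \<mu>0 x0 (Suc n) \<le> 1" "n > 0"
  shows "weighted_degree_bound (Suc (2 * n)) \<le> 2 * \<mu>0 * real n"
proof -
  have "weighted_degree_bound (Suc (2 * n)) \<le> weighted_degree_bound (2 * Suc n)"
    by (rule weighted_degree_bound_mono) simp
  also have "\<dots> = beta b \<mu>0 x0 (Suc n) * (\<mu>0 * real (Suc n))"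
    by (rule weighted_degree_bound_eq_beta) simp
  also have "\<dots> \<le> \<mu>0 * real (Suc n)"
    using assms(1) mu0_pos beta_nonneg by (intro mult_left_le_one_le) auto
  also have "\<dots> \<le> 2 * \<mu>0 * real n"
    using assms(2) mu0_pos by simp
  finally show ?thesis .
qed

lemma commutator_bound_le_beta:
  assumes n: "n > 0" and degree_bound: "weighted_degree_bound (Suc (2 * n)) \<le> 2 * \<mu>0 * real n"
    and V: "0 \<le> V" "\<mu>0 * V \<le> U"
  shows "3 * (1 / real n)\<^sup>2 / \<mu>0 * weighted_degree_bound (2 * n) * weighted_degree_bound (Suc (2 * n)) * V
    \<le> 6 * beta b \<mu>0 x0 n * U"
proof -
  let ?\<beta> = "beta b \<mu>0 x0 n"
  have "3 * (1 / real n)\<^sup>2 / \<mu>0 * weighted_degree_bound (2 * n) * weighted_degree_bound (Suc (2 * n)) * V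
      = 3 * ?\<beta> * (weighted_degree_bound (Suc (2 * n)) / real n * V)"
    unfolding weighted_degree_bound_eq_beta[OF n] using n mu0_pos by (simp add: power2_eq_square field_simps)
  also have "\<dots> \<le> 3 * ?\<beta> * (2 * \<mu>0 * V)"
  proof -
    have "weighted_degree_bound (Suc (2 * n)) / real n \<le> 2 * \<mu>0"
      using degree_bound n by (simp add: divide_le_eq mult_ac)
    then show ?thesis
      using beta_nonneg V by (intro mult_left_mono mult_right_mono) auto
  qed
  also have "\<dots> \<le> 6 * ?\<beta> * U"
    using mult_left_mono[OF V(2), of "6 * ?\<beta>"] beta_nonneg by (simp add: mult_ac)
  finally show ?thesis .
qed

lemma cutoff_energy_le:
  assumes eigen: "\<And>x. L (L u) x + of_real (W x) * u x - of_real lam * \<i> * u x = 0"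
    and W: "\<And>x. - Q x \<le> W x" and Q: "\<And>x. 0 \<le> Q x"
    and u: "in_l2 \<mu> u" and n: "n > 0"
    and degree_bound: "weighted_degree_bound (Suc (2 * n)) \<le> 2 * \<mu>0 * real n"
  shows "l2_norm_sq \<mu> (L (\<lambda>x. of_real (cutoff b x0 n x) * u x))
    \<le> 6 * (beta b \<mu>0 x0 n * l2_norm_sq \<mu> u
      + Re (l2_inner \<mu> (\<lambda>x. of_real (Q x * cutoff b x0 n x) * u x) (\<lambda>x. of_real (cutoff b x0 n x) * u x)))"
proof -
  interpret lipschitz_cutoff b x0 \<theta> \<mu> \<mu>0 "cutoff b x0 n" "2 * n" "1 / real n"
    by unfold_locales (auto intro: cutoff_eq_0 abs_cutoff_diff_le)
  let ?R = "Re (l2_inner \<mu> (\<lambda>x. of_real (Q x * cutoff b x0 n x) * u x) (\<lambda>x. of_real (cutoff b x0 n x) * u x))"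
  define V where "V = (\<Sum>y\<in>B (Suc (2 * n)). (cmod (u y))\<^sup>2)"
  have inner: "?R = Re (\<Sum>x\<in>B (2 * n). of_real (\<mu> x) * (of_real (Q x * cutoff b x0 n x) * u x)
      * cnj (of_real (cutoff b x0 n x) * u x))"
    by (subst l2_inner_finite_support[OF finite_ball]) (auto simp: vanishes_outside_ball)
  have norm: "l2_norm_sq \<mu> (L (\<lambda>x. of_real (cutoff b x0 n x) * u x))
      = (\<Sum>x\<in>B (2 * n). \<mu> x * (cmod (L (\<lambda>x. of_real (cutoff b x0 n x) * u x) x))\<^sup>2)"
    by (intro l2_norm_sq_finite_support finite_ball mag_lap_mult_outside_ball)
  have energy: "l2_norm_sq \<mu> (L (\<lambda>x. of_real (cutoff b x0 n x) * u x))
      \<le> ?R + 3 * (1 / real n)\<^sup>2 / \<mu>0 * D (2 * n) * D (Suc (2 * n)) * V"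
    using localized_energy_le[of u] eigenfunction_green_term_le[OF eigen W, where S="B (2 * n)" and \<phi>="cutoff b x0 n"]
    unfolding inner V_def norm by linarith
  have R: "?R \<ge> 0"
    unfolding inner Re_sum Re_mult_cnj_of_real using Q mu_pos
    by (intro sum_nonneg) (simp add: less_imp_le)
  have "3 * (1 / real n)\<^sup>2 / \<mu>0 * D (2 * n) * D (Suc (2 * n)) * V \<le> 6 * beta b \<mu>0 x0 n * l2_norm_sq \<mu> u"
    unfolding V_def using n degree_bound mu0_sum_le_l2_norm_sq[OF u finite_ball]
    by (intro commutator_bound_le_beta) (simp_all add: sum_nonneg)
  with energy R show ?thesis
    by (simp add: algebra_simps)
qed

end

theorem proposition5p5:
  fixes b \<theta> :: "'v \<Rightarrow> 'v \<Rightarrow> real" and \<mu> :: "'v \<Rightarrow> real" and \<mu>0 :: real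
    and x0 :: 'v and q :: "real \<Rightarrow> real" and \<alpha> :: real and W :: "'v \<Rightarrow> real"
    and C1 :: real and N1 :: nat and u :: "'v \<Rightarrow> complex" and lam :: real
  assumes V_countable: "countable (UNIV :: 'v set)"
    and V_infinite: "infinite (UNIV :: 'v set)"
    and graph: "weighted_graph b"
    and conn: "graph_connected b"
    and mu0_pos: "\<mu>0 > 0"
    and mu_ge: "\<forall>x. \<mu> x \<ge> \<mu>0"
    and phase: "phase_function \<theta>"
    and q_pos: "\<forall>s\<ge>0. q s > 0"
    and q_mono: "mono_on {0..} q"
    and alpha: "0 \<le> \<alpha>" "\<alpha> \<le> 1"
    and q_growth: "q \<in> O(\<lambda>s. s powr \<alpha>)"
    and W_lower: "\<forall>x. W x \<ge> - q (real (gdist b x0 x))"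
    and C1: "0 < C1" "C1 < 1"
    and N1: "N1 \<ge> 1"
    and beta_le: "\<forall>n\<ge>N1. beta b \<mu>0 x0 n \<le> C1"
    and u_l2: "in_l2 \<mu> u"
    and Hu_l2: "in_l2 \<mu> (\<lambda>x. mag_lap b \<theta> \<mu> (mag_lap b \<theta> \<mu> u) x + complex_of_real (W x) * u x)"
    and eigen: "\<forall>x. mag_lap b \<theta> \<mu> (mag_lap b \<theta> \<mu> u) x + complex_of_real (W x) * u x
                    - complex_of_real lam * \<i> * u x = 0"
  shows "\<exists>C. \<forall>n\<ge>N1.
     l2_norm_sq \<mu> (mag_lap b \<theta> \<mu> (\<lambda>x. complex_of_real (cutoff b x0 n x) * u x))
       \<le> C * (beta b \<mu>0 x0 n * l2_norm_sq \<mu> u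
              + Re (l2_inner \<mu>
                      (\<lambda>x. complex_of_real (q (real (gdist b x0 x)) * cutoff b x0 n x) * u x)
                      (\<lambda>x. complex_of_real (cutoff b x0 n x) * u x)))"
proof -
  interpret magnetic_graph b x0 \<theta> \<mu> \<mu>0
    using graph conn mu0_pos mu_ge phase by unfold_locales auto
  have "l2_norm_sq \<mu> (L (\<lambda>x. of_real (cutoff b x0 n x) * u x))
      \<le> 6 * (beta b \<mu>0 x0 n * l2_norm_sq \<mu> u
        + Re (l2_inner \<mu> (\<lambda>x. of_real (q (real (r x)) * cutoff b x0 n x) * u x)
                        (\<lambda>x. of_real (cutoff b x0 n x) * u x)))"
    if n: "N1 \<le> n" for n
    using eigen W_lower q_pos u_l2 n N1 beta_le[rule_format, of "Suc n"] C1
    by (intro cutoff_energy_le weighted_degree_bound_Suc_double_le) (auto simp: less_imp_le)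
  then show ?thesis
    by blast
qed

end
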